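(* Let $\mathbb{F}_q$ be any finite field and let $S\subseteq \mathbb{F}_q\setminus\{0\}$ be any symmetric set (i.e. $S=-S$). Then \[\Theta_{\mathrm{lin}}\big(\Gamma(\mathbb{F}_q,S)\big)\le q^{\,1-\frac{|S|}{q-1}}.\] Equivalently, for every $n\ge 1$, every linear subspace of $\mathbb{F}_q^n$ that is an independent set in $\Gamma(\mathbb{F}_q,S)^n$ has dimension $m$ satisfying $\frac{m}{n}\le 1-\frac{|S|}{q-1}$.
   Context: For graphs $G_1,\dots,G_k$, the strong product $G_1\boxtimes\cdots\boxtimes G_k$ has vertex set $V(G_1)\times\cdots\times V(G_k)$, and two distinct vertices $(v_1,\dots,v_k)$ and $(u_1,\dots,u_k)$ are adjacent iff for every $i$, either $v_i=u_i$ or $\{v_i,u_i\}\in E(G_i)$. Write $G^k$ for the strong product of $k$ copies of $G$. For a symmetric set $S\subseteq\mathbb{F}_q\setminus\{0\}$ (with $S=-S$; $S$ need not generate $\mathbb{F}_q$), the Cayley graph $\Gamma(\mathbb{F}_q,S)$ has vertex set $\mathbb{F}_q$, and $u,v$ are adjacent iff $u-v\in S$. For a graph $G$ with $V(G)=\mathbb{F}_q$ and $k\ge1$, the linear independence number $\alpha_{\mathrm{lin}}(G^k)$ is the largest size of an independent set of $G^k$ that is a linear subspace of $\mathbb{F}_q^k$ (equivalently, one of the form $\{(x,Ax):x\in\mathbb{F}_q^m\}$ for some $1\le m\le k$ and some $A\in\mathbb{F}_q^{(k-m)\times m}$, up to the order of coordinates). The linear Shannon capacity is $\Theta_{\mathrm{lin}}(G)=\sup_k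 \alpha_{\mathrm{lin}}(G^k)^{1/k}=\lim_{k\to\infty}\alpha_{\mathrm{lin}}(G^k)^{1/k}$. *)

theory Defs
  imports Complex_Main "HOL-Library.Cardinality"
begin

text \<open>Vectors of \<open>F^k\<close> are represented as functions \<open>nat \<Rightarrow> 'a\<close> vanishing outside \<open>{..<k}\<close>.\<close>
definition vecs :: "nat \<Rightarrow> (nat \<Rightarrow> 'a::field) set" where
  "vecs k = {x. \<forall>i\<ge>k. x i = 0}"

definition lin_subspace :: "nat \<Rightarrow> (nat \<Rightarrow> 'a::field) set \<Rightarrow> bool" where
  "lin_subspace k V \<longleftrightarrow> V \<subseteq> vecs k \<and> (\<lambda>i. 0) \<in> V \<and>
     (\<forall>x\<in>V. \<forall>y\<in>V. (\<lambda>i. x i + y i) \<in> V) \<and>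
     (\<forall>c. \<forall>x\<in>V. (\<lambda>i. c * x i) \<in> V)"

definition cayley_adj :: "'a::field set \<Rightarrow> 'a \<Rightarrow> 'a \<Rightarrow> bool" where
  "cayley_adj S u v \<longleftrightarrow> u - v \<in> S"

definition strong_pow_adj :: "('a \<Rightarrow> 'a \<Rightarrow> bool) \<Rightarrow> nat \<Rightarrow> (nat \<Rightarrow> 'a) \<Rightarrow> (nat \<Rightarrow> 'a) \<Rightarrow> bool" where
  "strong_pow_adj E k x y \<longleftrightarrow> x \<noteq> y \<and> (\<forall>i<k. x i = y i \<or> E (x i) (y i))"

definition indep_set :: "('b \<Rightarrow> 'b \<Rightarrow> bool) \<Rightarrow> 'b set \<Rightarrow> bool" where
  "indep_set A I \<longleftrightarrow> (\<forall>x\<in>I. \<forall>y\<in>I. \<not> A x y)"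

definition alpha_lin :: "('a::{finite,field} \<Rightarrow> 'a \<Rightarrow> bool) \<Rightarrow> nat \<Rightarrow> nat" where
  "alpha_lin E k = Max {card V | V. lin_subspace k V \<and> indep_set (strong_pow_adj E k) V}"

definition theta_lin :: "('a::{finite,field} \<Rightarrow> 'a \<Rightarrow> bool) \<Rightarrow> real" where
  "theta_lin E = (SUP k\<in>{1..}. real (alpha_lin E k) powr (1 / real k))"

end

theory Submission imports Defs "HOL-Computational_Algebra.Polynomial" begin

text \<open>Let \<open>V\<close> be a linear subspace of \<open>F\<^sub>q\<^sup>n\<close> that is independent in \<open>\<Gamma>(F\<^sub>q,S)\<^sup>n\<close> and let
  \<open>R = F\<^sub>q - (S \<union> {0})\<close>. Every nonzero \<open>y \<in> V\<close> is non-adjacent to \<open>0\<close>, so some coordinate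
  \<open>y\<^sub>i\<close> lies in \<open>R\<close>; hence \<open>f(y) = \<Prod>\<^sub>i<n \<Prod>\<^sub>r\<in>R (y\<^sub>i - r)\<close> vanishes on \<open>V - {0}\<close> while
  \<open>f(0) \<noteq> 0\<close>, and so \<open>\<Sum>\<^sub>y\<in>V f(y) \<noteq> 0\<close>. On the other hand, splitting off one coordinate
  direction at a time and using \<open>\<Sum>\<^sub>t\<in>F\<^sub>q t\<^sup>j = 0\<close> for \<open>j < q - 1\<close>, the sum over \<open>V\<close> of a
  product of fewer than \<open>(q - 1) dim V\<close> affine functions vanishes. Thus
  \<open>(q - 1) dim V \<le> n |R| = n (q - 1 - |S|)\<close>, which is the bound.\<close>

lemma of_nat_CARD_eq_0: "(of_nat CARD('a) :: 'a::{finite,field}) = 0"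
proof -
  have "(\<Sum>t\<in>UNIV. t + 1) = (\<Sum>t\<in>UNIV. (t::'a))"
    by (rule sum.reindex_bij_witness[of _ "\<lambda>t. t - 1" "\<lambda>t. t + 1"]) auto
  then show ?thesis by (simp add: sum.distrib)
qed

lemma CARD_field_ge_2: "2 \<le> CARD('a::{finite,field})"
proof -
  have "card {0, 1::'a} \<le> CARD('a)" by (rule card_mono) auto
  then show ?thesis by simp
qed

lemma exists_nonzero_power_neq_1:
  assumes "0 < j" "j < CARD('a) - 1"
  obtains a :: "'a::{finite,field}" where "a \<noteq> 0" "a ^ j \<noteq> 1"
proof -
  define p :: "'a poly" where "p = monom 1 j + [:-1:]"
  have "degree p = j"
    unfolding p_def using assms(1) by (subst degree_add_eq_left) (auto simp: degree_monom_eq)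
  moreover from this have "p \<noteq> 0" using assms(1) by auto
  ultimately have "card {x. poly p x = 0} \<le> j" by (metis card_poly_roots_bound)
  also have "\<dots> < card (UNIV - {0::'a})" using assms(2) by (simp add: card_Diff_singleton)
  finally have "\<not> UNIV - {0} \<subseteq> {x. poly p x = 0}"
    using card_mono[of "{x. poly p x = 0}" "UNIV - {0}"] by auto
  then show ?thesis using that by (auto simp: p_def poly_monom)
qed

lemma sum_UNIV_power_eq_0:
  assumes "j < CARD('a) - 1"
  shows "(\<Sum>t\<in>UNIV. t ^ j) = (0::'a::{finite,field})"
proof (cases "j = 0")
  case True
  then show ?thesis using of_nat_CARD_eq_0 by simp
next
  case False
  then obtain a :: 'a where a: "a \<noteq> 0" "a ^ j \<noteq> 1"
    using assms exists_nonzero_power_neq_1 by blast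
  have "(\<Sum>t\<in>UNIV. t ^ j) = (\<Sum>t\<in>UNIV. (a * t) ^ j)"
    by (rule sum.reindex_bij_witness[of _ "\<lambda>t. a * t" "\<lambda>t. t / a"]) (use a in auto)
  also have "\<dots> = a ^ j * (\<Sum>t\<in>UNIV. t ^ j)"
    by (simp add: power_mult_distrib sum_distrib_left)
  finally have "(a ^ j - 1) * (\<Sum>t\<in>UNIV. t ^ j) = 0" by (simp add: algebra_simps)
  then show ?thesis using a by simp
qed

lemma prod_affine_expand:
  fixes t :: "'a::comm_ring_1"
  assumes "finite K"
  shows "(\<Prod>k\<in>K. t * a k + d k)
           = (\<Sum>X\<in>Pow K. t ^ card X * ((\<Prod>k\<in>X. a k) * (\<Prod>k\<in>K - X. d k)))"
  by (simp add: prod_add[OF assms] prod.distrib mult.assoc)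

lemma finite_vecs: "finite (vecs n :: (nat \<Rightarrow> 'a::{finite,field}) set)"
proof -
  have "vecs n = {f::nat \<Rightarrow> 'a. \<forall>x. (x \<in> {..<n} \<longrightarrow> f x \<in> UNIV) \<and> (x \<notin> {..<n} \<longrightarrow> f x = 0)}"
    by (auto simp: vecs_def)
  then show ?thesis using finite_set_of_finite_funs[of "{..<n}" "UNIV::'a set" 0] by simp
qed

lemma lin_subspace_finite:
  "lin_subspace n (V :: (nat \<Rightarrow> 'a::{finite,field}) set) \<Longrightarrow> finite V"
  using finite_vecs finite_subset by (auto simp: lin_subspace_def)

lemma lin_subspace_zero: "lin_subspace n V \<Longrightarrow> (\<lambda>i. 0) \<in> V"
  by (simp add: lin_subspace_def)

lemma lin_subspace_split:
  fixes V :: "(nat \<Rightarrow> 'a::{finite,field}) set"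
  assumes V: "lin_subspace n V" and nonzero: "V \<noteq> {\<lambda>i. 0}"
  obtains W e where "lin_subspace n W" "card V = card W * CARD('a)"
    and "\<And>f :: _ \<Rightarrow> 'b::comm_monoid_add.
           (\<Sum>y\<in>V. f y) = (\<Sum>w\<in>W. \<Sum>t\<in>UNIV. f (\<lambda>l. w l + t * e l))"
proof -
  have add: "\<And>x y. x \<in> V \<Longrightarrow> y \<in> V \<Longrightarrow> (\<lambda>i. x i + y i) \<in> V"
    and smul: "\<And>a x. x \<in> V \<Longrightarrow> (\<lambda>i. a * x i) \<in> V"
    using V unfolding lin_subspace_def by blast+
  obtain v where "v \<in> V" "v \<noteq> (\<lambda>i. 0)"
    using nonzero lin_subspace_zero[OF V] by blast
  then obtain i where v: "v \<in> V" "v i \<noteq> 0" by auto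
  define e where "e = (\<lambda>l. v l / v i)"
  have e: "e \<in> V" "e i = 1"
    using smul[OF v(1), of "1 / v i"] v(2) by (simp_all add: e_def)
  define W where "W = {w\<in>V. w i = 0}"
  define \<psi> where "\<psi> = (\<lambda>(w, t). \<lambda>l. w l + t * e l :: 'a)"
  have W: "lin_subspace n W" using V unfolding lin_subspace_def W_def by auto
  have inj: "inj_on \<psi> (W \<times> UNIV)"
  proof (rule inj_onI, clarify)
    fix w t w' t' assume "w \<in> W" "w' \<in> W" and eq: "\<psi> (w, t) = \<psi> (w', t')"
    moreover have "w i + t * e i = w' i + t' * e i" using fun_cong[OF eq, of i] by (simp add: \<psi>_def)
    ultimately have "t = t'" using e(2) by (simp add: W_def)
    with eq show "w = w' \<and> t = t'" by (simp add: \<psi>_def fun_eq_iff)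
  qed
  have img: "\<psi> ` (W \<times> UNIV) = V"
  proof
    show "\<psi> ` (W \<times> UNIV) \<subseteq> V" using add smul e(1) by (auto simp: \<psi>_def W_def)
  next
    show "V \<subseteq> \<psi> ` (W \<times> UNIV)"
    proof
      fix y assume y: "y \<in> V"
      define w where "w = (\<lambda>l. y l + (- y i) * e l)"
      have "w \<in> V" unfolding w_def using add smul e(1) y by blast
      then have "w \<in> W" using e(2) by (simp add: W_def w_def)
      moreover have "y = \<psi> (w, y i)" by (simp add: \<psi>_def w_def)
      ultimately show "y \<in> \<psi> ` (W \<times> UNIV)" by blast
    qed
  qed
  show ?thesis
  proof (rule that[OF W])
    show "card V = card W * CARD('a)"
      using card_image[OF inj] img by (simp add: card_cartesian_product)
  next
    fix f :: "_ \<Rightarrow> 'b"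
    have "(\<Sum>y\<in>V. f y) = (\<Sum>p\<in>W \<times> UNIV. f (\<psi> p))"
      using sum.reindex[OF inj, of f] img by simp
    also have "\<dots> = (\<Sum>w\<in>W. \<Sum>t\<in>UNIV. f (\<lambda>l. w l + t * e l))"
      unfolding sum.cartesian_product \<psi>_def by (simp add: split_def)
    finally show "(\<Sum>y\<in>V. f y) = (\<Sum>w\<in>W. \<Sum>t\<in>UNIV. f (\<lambda>l. w l + t * e l))" .
  qed
qed

text \<open>The hypothesis says \<open>|K| < (q - 1) dim V\<close>, phrased through \<open>|V| = q\<^sup>d\<^sup>i\<^sup>m \<^sup>V\<close>.\<close>
lemma sum_lin_subspace_prod_affine_eq_0:
  fixes V :: "(nat \<Rightarrow> 'a::{finite,field}) set"
  assumes "lin_subspace n V" "finite K" "CARD('a) ^ card K < card V ^ (CARD('a) - 1)"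
  shows "(\<Sum>y\<in>V. \<Prod>k\<in>K. y (c k) + b k) = 0"
  using assms
proof (induction "card V" arbitrary: V K b rule: less_induct)
  case less
  let ?q = "CARD('a)"
  have "V \<noteq> {\<lambda>i. 0}" using less.prems(3) by auto
  then obtain W e where W: "lin_subspace n W" and cardV: "card V = card W * ?q"
    and sum_V: "\<And>f :: _ \<Rightarrow> 'a. (\<Sum>y\<in>V. f y) = (\<Sum>w\<in>W. \<Sum>t\<in>UNIV. f (\<lambda>l. w l + t * e l))"
    using lin_subspace_split[OF less.prems(1)] by blast
  have "card W \<noteq> 0"
    using lin_subspace_zero[OF W] lin_subspace_finite[OF W] by auto
  then have W_less: "card W < card V" using cardV CARD_field_ge_2[where 'a='a] by simp
  define E where "E X = (\<Prod>k\<in>X. e (c k))" for X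
  define G where "G X w = (\<Prod>k\<in>K - X. w (c k) + b k)" for X w
  have "(\<Sum>y\<in>V. \<Prod>k\<in>K. y (c k) + b k)
          = (\<Sum>w\<in>W. \<Sum>t\<in>UNIV. \<Prod>k\<in>K. t * e (c k) + (w (c k) + b k))"
    by (simp add: sum_V algebra_simps)
  also have "\<dots> = (\<Sum>w\<in>W. \<Sum>t\<in>UNIV. \<Sum>X\<in>Pow K. t ^ card X * (E X * G X w))"
    by (simp add: prod_affine_expand[OF less.prems(2)] E_def G_def)
  also have "\<dots> = (\<Sum>X\<in>Pow K. \<Sum>w\<in>W. \<Sum>t\<in>UNIV. t ^ card X * (E X * G X w))"
    by (subst sum.swap) (simp only: sum.swap[of _ UNIV])
  also have "\<dots> = (\<Sum>X\<in>Pow K. (\<Sum>t\<in>UNIV. t ^ card X) * (E X * (\<Sum>w\<in>W. G X w)))"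
    by (simp only: sum_distrib_left sum_distrib_right)
  also have "\<dots> = 0"
  proof (rule sum.neutral, rule ballI)
    fix X assume "X \<in> Pow K"
    then have XK: "X \<subseteq> K" by simp
    txt \<open>Either the \<open>t\<close>-sum kills the term, or \<open>G X\<close> has few enough factors for the
      induction hypothesis on \<open>W\<close>.\<close>
    show "(\<Sum>t\<in>UNIV. t ^ card X) * (E X * (\<Sum>w\<in>W. G X w)) = 0"
    proof (cases "card X < ?q - 1")
      case True
      then show ?thesis by (simp add: sum_UNIV_power_eq_0)
    next
      case False
      have "card (K - X) = card K - card X" "card X \<le> card K"
        using card_Diff_subset[OF finite_subset[OF XK less.prems(2)] XK]
          card_mono[OF less.prems(2) XK] by auto
      then have "?q ^ card (K - X) * ?q ^ (?q - 1) \<le> ?q ^ card K"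
        using False CARD_field_ge_2[where 'a='a]
        by (simp add: power_add[symmetric] power_increasing)
      also have "\<dots> < card W ^ (?q - 1) * ?q ^ (?q - 1)"
        using less.prems(3) by (simp add: cardV power_mult_distrib)
      finally have "?q ^ card (K - X) < card W ^ (?q - 1)" by simp
      then have "(\<Sum>w\<in>W. G X w) = 0"
        unfolding G_def using less.hyps[OF W_less W] less.prems(2) by simp
      then show ?thesis by simp
    qed
  qed
  finally show ?case .
qed

lemma card_indep_lin_subspace_power_le:
  fixes S :: "'a::{finite,field} set" and V :: "(nat \<Rightarrow> 'a) set"
  assumes S: "0 \<notin> S" and V: "lin_subspace n V"
    and indep: "indep_set (strong_pow_adj (cayley_adj S) n) V"
  shows "card V ^ (CARD('a) - 1) \<le> CARD('a) ^ (n * card (- insert 0 S))"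
proof (rule ccontr)
  define K where "K = {..<n} \<times> - insert (0::'a) S"
  define f where "f y = (\<Prod>k\<in>K. y (fst k) + - snd k)" for y :: "nat \<Rightarrow> 'a"
  have K: "finite K" by (simp add: K_def)
  assume "\<not> ?thesis"
  then have "CARD('a) ^ card K < card V ^ (CARD('a) - 1)"
    by (simp add: K_def card_cartesian_product)
  then have sum_f: "(\<Sum>y\<in>V. f y) = 0"
    unfolding f_def by (rule sum_lin_subspace_prod_affine_eq_0[OF V K])
  have zero: "(\<lambda>i. 0) \<in> V" by (rule lin_subspace_zero[OF V])
  have "f y = 0" if y: "y \<in> V - {\<lambda>i. 0}" for y
  proof -
    have "\<not> strong_pow_adj (cayley_adj S) n y (\<lambda>i. 0)"
      using indep zero y unfolding indep_set_def by blast
    then obtain i where "i < n" "y i \<noteq> 0" "y i \<notin> S"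
      using y by (auto simp: strong_pow_adj_def cayley_adj_def)
    then have "(i, y i) \<in> K" by (simp add: K_def)
    then show "f y = 0" unfolding f_def using K by (auto intro!: prod_zero bexI[where x = "(i, y i)"])
  qed
  then have "f (\<lambda>i. 0) = 0"
    using sum_f sum.remove[OF lin_subspace_finite[OF V] zero, of f] by simp
  moreover have "f (\<lambda>i. 0) \<noteq> 0" unfolding f_def using K by (auto simp: K_def)
  ultimately show False by simp
qed

lemma card_indep_lin_subspace_root_le:
  fixes S :: "'a::{finite,field} set" and V :: "(nat \<Rightarrow> 'a) set"
  assumes S: "0 \<notin> S" and V: "lin_subspace n V"
    and indep: "indep_set (strong_pow_adj (cayley_adj S) n) V" and n: "n \<ge> 1"
  shows "real (card V) powr (1 / real n)
           \<le> real CARD('a) powr (1 - real (card S) / (real CARD('a) - 1))"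
proof -
  let ?q = "CARD('a)"
  define r where "r = card (- insert (0::'a) S)"
  have q: "2 \<le> ?q" by (rule CARD_field_ge_2)
  have "card (insert (0::'a) S) \<le> ?q" by (rule card_mono) auto
  then have r: "real r = real ?q - 1 - real (card S)"
    using S by (simp add: r_def Compl_eq_Diff_UNIV card_Diff_subset of_nat_diff)
  have V_pos: "real (card V) > 0"
    using lin_subspace_zero[OF V] lin_subspace_finite[OF V] by (auto simp: card_gt_0_iff)
  have "real (card V) ^ (?q - 1) \<le> real ?q ^ (n * r)"
    unfolding r_def of_nat_power[symmetric] of_nat_le_iff
    by (rule card_indep_lin_subspace_power_le[OF S V indep])
  moreover have "real ?q > 0" using q by simp
  ultimately have "real (card V) powr real (?q - 1) \<le> real ?q powr real (n * r)"
    using V_pos by (simp only: powr_realpow)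
  then have "(real (card V) powr real (?q - 1)) powr (1 / real (?q - 1))
               \<le> (real ?q powr real (n * r)) powr (1 / real (?q - 1))"
    by (rule powr_mono2[rotated 2]) auto
  then have "real (card V) \<le> real ?q powr (real (n * r) / real (?q - 1))"
    using q V_pos by (simp add: powr_powr)
  then have "real (card V) powr (1 / real n)
               \<le> (real ?q powr (real (n * r) / real (?q - 1))) powr (1 / real n)"
    by (rule powr_mono2[rotated 2]) (use V_pos in auto)
  also have "\<dots> = real ?q powr (real r / real (?q - 1))"
    using n by (simp add: powr_powr)
  also have "real r / real (?q - 1) = 1 - real (card S) / (real ?q - 1)"
    using r q by (simp add: of_nat_diff field_simps)
  finally show ?thesis .
qed

lemma alpha_lin_attained:
  obtains V :: "(nat \<Rightarrow> 'a::{finite,field}) set"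
  where "alpha_lin E k = card V" "lin_subspace k V" "indep_set (strong_pow_adj E k) V"
proof -
  define A where
    "A = {card V | V :: (nat \<Rightarrow> 'a) set. lin_subspace k V \<and> indep_set (strong_pow_adj E k) V}"
  have "lin_subspace k {\<lambda>i::nat. 0::'a}" "indep_set (strong_pow_adj E k) {\<lambda>i::nat. 0::'a}"
    by (auto simp: lin_subspace_def vecs_def indep_set_def strong_pow_adj_def)
  then have "A \<noteq> {}" unfolding A_def by blast
  moreover have "A \<subseteq> card ` Pow (vecs k :: (nat \<Rightarrow> 'a) set)"
    unfolding A_def lin_subspace_def by auto
  then have "finite A" using finite_vecs by (meson finite_Pow_iff finite_imageI finite_subset)
  ultimately have "Max A \<in> A" by (rule Max_in[rotated])
  then show ?thesis using that unfolding alpha_lin_def A_def by auto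
qed

theorem theorem1:
  fixes S :: "'a::{finite,field} set"
  assumes "0 \<notin> S"
    and "\<forall>s\<in>S. - s \<in> S"
  shows "theta_lin (cayley_adj S)
           \<le> real CARD('a) powr (1 - real (card S) / (real CARD('a) - 1))"
  unfolding theta_lin_def
proof (rule cSUP_least)
  fix k :: nat assume "k \<in> {1..}"
  moreover obtain V :: "(nat \<Rightarrow> 'a) set" where "alpha_lin (cayley_adj S) k = card V"
    "lin_subspace k V" "indep_set (strong_pow_adj (cayley_adj S) k) V"
    by (rule alpha_lin_attained)
  ultimately show "real (alpha_lin (cayley_adj S) k) powr (1 / real k)
           \<le> real CARD('a) powr (1 - real (card S) / (real CARD('a) - 1))"
    using card_indep_lin_subspace_root_le[OF assms(1)] by simp
qed simp

end
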